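(* If $A_0\in G$ fixes $Q$, then $A_0$ leaves invariant the subgroup $H_Q\le H_\Gamma$ generated by the images of the elements of $\mathrm{supp}\,Q$.
   Context: $\Gamma$ is a finite simplicial graph with vertex set $X$, $|X|=2g$, $A_\Gamma$ its right-angled Artin group, $H_\Gamma$ its abelianization, $L=X\cup X^{-1}$, $\bar u\in X$ the vertex of $u\in L$; $\mathrm{lk}(v)$ = neighbours, $\mathrm{st}(v)=\mathrm{lk}(v)\cup\{v\}$; domination $v\ge w$ iff $\mathrm{lk}(w)\subset\mathrm{st}(v)$. Fix a bijection $u\mapsto u^*$ of $L$ with $(u^* )^*=u^{-1}$ and letters $a_1,\dots,a_g\in L$ whose vertices together with those of $a_1^*,\dots,a_g^*$ are all of $X$; $Q=\sum\{[a_i]\wedge[a_i^*]: \bar a_i^*\text{ adjacent to }\bar a_i\}\in\Lambda^2H_\Gamma$, assumed nonzero, with $\mathrm{Aut}\,H_\Gamma$ acting diagonally on $\Lambda^2 H_\Gamma$. $\mathrm{supp}\,Q$ is the set of vertices appearing in $Q$. For $a\in X$, $b\in\mathrm{supp}\,Q$ with $a\ge b$, $a\ne b$, $E_{a,b}\in\mathrm{Aut}\,H_\Gamma$ sends $[b]\mapsto[b]+[a]$ and fixes $[x]$ for $x\ne b$; $N_b$ sends $[b]\mapsto-[b]$ and fixes the other basis elements. $G$ is the subgroup of $\mathrm{Aut}\,H_\Gamma$ generated by these $E_{a,b}$ and the $N_b$, $b\in\mathrm{supp}\,Q$. *)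

theory Defs
  imports "HOL-Analysis.Analysis"
begin

text \<open>Vertices: a finite type 'v, so X = UNIV. The graph is a symmetric irreflexive
relation E. H_Gamma = int^'v (free abelian group with basis the vertices, basis vector
of x is axis x 1). Letters L = X \<union> X^-1 are pairs (x, s): s = True means x, s = False
means x^-1. Endomorphisms of H_Gamma are integer matrices acting by *v; the column
of x is the image of [x]. Lambda^2 H_Gamma is modelled by antisymmetric integer
matrices, with u \<and> v = u v^T - v u^T, and Aut H_Gamma acts diagonally via
A \<cdot> M = A M A^T.\<close>

definition lk :: "('v \<Rightarrow> 'v \<Rightarrow> bool) \<Rightarrow> 'v \<Rightarrow> 'v set" where
  "lk E v = {w. E v w}"

definition st :: "('v \<Rightarrow> 'v \<Rightarrow> bool) \<Rightarrow> 'v \<Rightarrow> 'v set" where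
  "st E v = insert v (lk E v)"

definition dominates :: "('v \<Rightarrow> 'v \<Rightarrow> bool) \<Rightarrow> 'v \<Rightarrow> 'v \<Rightarrow> bool" where
  "dominates E v w \<longleftrightarrow> lk E w \<subseteq> st E v"

definition letter_inv :: "'v \<times> bool \<Rightarrow> 'v \<times> bool" where
  "letter_inv u = (fst u, \<not> snd u)"

definition cls :: "'v \<times> bool \<Rightarrow> int ^ 'v::finite" where
  "cls u = (if snd u then axis (fst u) 1 else - axis (fst u) 1)"

definition wedge :: "int ^ 'v::finite \<Rightarrow> int ^ 'v \<Rightarrow> int ^ 'v ^ 'v" where
  "wedge u v = (\<chi> x y. u $ x * v $ y - u $ y * v $ x)"

text \<open>Q = sum over i < g with bar(a_i^*) adjacent to bar(a_i) of [a_i] \<and> [a_i^*]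
(the letters a_1..a_g are indexed by 0..g-1)\<close>
definition Qform :: "('v::finite \<Rightarrow> 'v \<Rightarrow> bool) \<Rightarrow> ('v \<times> bool \<Rightarrow> 'v \<times> bool)
    \<Rightarrow> (nat \<Rightarrow> 'v \<times> bool) \<Rightarrow> nat \<Rightarrow> int ^ 'v ^ 'v" where
  "Qform E star a g =
     (\<Sum>i\<in>{i. i < g \<and> E (fst (star (a i))) (fst (a i))}. wedge (cls (a i)) (cls (star (a i))))"

definition act2 :: "int ^ 'v ^ 'v \<Rightarrow> int ^ 'v ^ 'v \<Rightarrow> int ^ 'v::finite ^ 'v" where
  "act2 A M = A ** M ** transpose A"

definition supp2 :: "int ^ 'v ^ 'v \<Rightarrow> 'v::finite set" where
  "supp2 M = {x. \<exists>y. M $ x $ y \<noteq> 0}"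

definition elemE :: "'v \<Rightarrow> 'v \<Rightarrow> int ^ 'v ^ 'v::finite" where
  "elemE a b = (\<chi> x y. (if x = y then 1 else 0) + (if x = a \<and> y = b then 1 else 0))"

definition elemE_inv :: "'v \<Rightarrow> 'v \<Rightarrow> int ^ 'v ^ 'v::finite" where
  "elemE_inv a b = (\<chi> x y. (if x = y then 1 else 0) - (if x = a \<and> y = b then 1 else 0))"

definition negN :: "'v \<Rightarrow> int ^ 'v ^ 'v::finite" where
  "negN b = (\<chi> x y. if x = y then (if x = b then -1 else 1) else 0)"

inductive_set genG :: "('v::finite \<Rightarrow> 'v \<Rightarrow> bool) \<Rightarrow> 'v set \<Rightarrow> (int ^ 'v ^ 'v) set"
  for E S where
  one: "mat 1 \<in> genG E S"
| E: "\<lbrakk>A \<in> genG E S; b \<in> S; dominates E a b; a \<noteq> b\<rbrakk> \<Longrightarrow> elemE a b ** A \<in> genG E S"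
| Einv: "\<lbrakk>A \<in> genG E S; b \<in> S; dominates E a b; a \<noteq> b\<rbrakk> \<Longrightarrow> elemE_inv a b ** A \<in> genG E S"
| N: "\<lbrakk>A \<in> genG E S; b \<in> S\<rbrakk> \<Longrightarrow> negN b ** A \<in> genG E S"

inductive_set zspan :: "'v set \<Rightarrow> (int ^ 'v::finite) set" for S where
  zero: "0 \<in> zspan S"
| gen: "b \<in> S \<Longrightarrow> axis b 1 \<in> zspan S"
| add: "\<lbrakk>u \<in> zspan S; v \<in> zspan S\<rbrakk> \<Longrightarrow> u + v \<in> zspan S"
| neg: "u \<in> zspan S \<Longrightarrow> - u \<in> zspan S"

end

theory Submission
  imports Defs
begin

text \<open>View Q as the linear map \<open>w \<mapsto> Q w\<close> on H. Since |X| = 2g and the vertices of the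
  a_i and a_i^* cover X, these 2g vertices are pairwise distinct, so for every pair occurring
  in Q we get Q [a_i^*] = [a_i] and Q [a_i] = -[a_i^*]; hence the image of Q is exactly H_Q.
  Every element of G is invertible, and an invertible A0 with A0 Q A0^T = Q maps the image of Q
  onto itself; membership in G is used for nothing else.\<close>

lemma sum_matrix_vector_mult:
  "(\<Sum>i\<in>I. M i) *v x = (\<Sum>i\<in>I. M i *v x)"
  by (induction I rule: infinite_finite_induct) (simp_all add: matrix_vector_mult_add_rdistrib)

lemma uminus_in_range_matrix_vector_mult:
  fixes M :: "'a::ring_1^'n^'m"
  assumes "x \<in> range ((*v) M)"
  shows "- x \<in> range ((*v) M)"
proof -
  obtain w where "x = M *v w" using assms by blast
  then have "- x = M *v (- w)" by (simp add: vec_eq_iff matrix_vector_mult_def sum_negf)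
  then show ?thesis by blast
qed

lemma range_matrix_vector_mult_invariant_under_congruence:
  fixes A Q :: "'a::comm_semiring_1^'n^'n"
  assumes "invertible A" and fix_Q: "A ** Q ** transpose A = Q"
  shows "(*v) A ` range ((*v) Q) = range ((*v) Q)"
proof -
  obtain A' where "A' ** A = mat 1"
    using \<open>invertible A\<close> unfolding invertible_def by blast
  then have transpose_inverse: "transpose A ** transpose A' = mat 1"
    by (metis matrix_transpose_mul transpose_mat)
  have "A *v (Q *v w) = (A ** Q ** transpose A) *v (transpose A' *v w)" for w
    by (metis matrix_vector_mul_assoc transpose_inverse matrix_vector_mul_lid)
  then have into: "A *v (Q *v w) \<in> range ((*v) Q)" for w
    unfolding fix_Q by (rule range_eqI)
  have "Q *v w = A *v (Q *v (transpose A *v w))" for w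
    by (metis fix_Q matrix_vector_mul_assoc)
  then have onto: "Q *v w \<in> (*v) A ` range ((*v) Q)" for w
    by (metis rangeI image_eqI)
  show ?thesis
    using into onto by blast
qed

lemma elemE_mult_row: "(elemE a b ** M) $ i = (if i = a then M $ i + M $ b else M $ i)"
proof -
  have "(elemE a b ** M) $ i $ j =
      (\<Sum>k\<in>UNIV. (if i = k then M $ k $ j else 0) + (if i = a \<and> k = b then M $ k $ j else 0))" for j
    unfolding matrix_matrix_mult_def elemE_def by (auto intro!: sum.cong)
  then show ?thesis by (simp add: vec_eq_iff sum.distrib)
qed

lemma elemE_inv_mult_row: "(elemE_inv a b ** M) $ i = (if i = a then M $ i - M $ b else M $ i)"
proof -
  have "(elemE_inv a b ** M) $ i $ j =
      (\<Sum>k\<in>UNIV. (if i = k then M $ k $ j else 0) - (if i = a \<and> k = b then M $ k $ j else 0))" for j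
    unfolding matrix_matrix_mult_def elemE_inv_def by (auto intro!: sum.cong simp: left_diff_distrib)
  then show ?thesis by (simp add: vec_eq_iff sum_subtractf)
qed

lemma elemE_mult_elemE_inv: "a \<noteq> b \<Longrightarrow> elemE a b ** elemE_inv a b = mat 1"
  by (simp add: vec_eq_iff elemE_mult_row elemE_inv_mult_row)
    (simp add: mat_def elemE_def elemE_inv_def)

lemma elemE_inv_mult_elemE: "a \<noteq> b \<Longrightarrow> elemE_inv a b ** elemE a b = mat 1"
  by (simp add: vec_eq_iff elemE_mult_row elemE_inv_mult_row)
    (simp add: mat_def elemE_def elemE_inv_def)

lemma negN_mult_row: "(negN b ** M) $ i = (if i = b then - M $ i else M $ i)"
proof -
  have "(negN b ** M) $ i $ j =
      (\<Sum>k\<in>UNIV. if k = i then (if i = b then - M $ i $ j else M $ i $ j) else 0)" for j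
    unfolding matrix_matrix_mult_def negN_def vec_lambda_beta by (rule sum.cong) auto
  then show ?thesis by (auto simp: vec_eq_iff)
qed

lemma negN_mult_negN: "negN b ** negN b = mat 1"
  by (simp add: vec_eq_iff negN_mult_row) (simp add: negN_def mat_def)

lemma genG_invertible: "A \<in> genG E S \<Longrightarrow> invertible A"
proof (induction rule: genG.induct)
  case one
  show ?case by (auto simp: invertible_def intro: exI[of _ "mat 1"])
next
  case (E A b a)
  then have "invertible (elemE a b)"
    using elemE_mult_elemE_inv elemE_inv_mult_elemE invertible_def by blast
  then show ?case using E.IH invertible_mult by blast
next
  case (Einv A b a)
  then have "invertible (elemE_inv a b)"
    using elemE_mult_elemE_inv elemE_inv_mult_elemE invertible_def by blast
  then show ?case using Einv.IH invertible_mult by blast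
next
  case (N A b)
  have "invertible (negN b)" using negN_mult_negN invertible_def by blast
  then show ?case using N.IH invertible_mult by blast
qed

lemma zspan_smult:
  assumes "u \<in> zspan S"
  shows "k *s u \<in> zspan S"
proof (induction k rule: int_induct[where k = 0])
  case base
  have "0 *s u = 0" by (simp add: vec_eq_iff)
  then show ?case using zspan.zero by metis
next
  case (step1 i)
  have "(i + 1) *s u = i *s u + u" by (simp add: vec_eq_iff algebra_simps)
  then show ?case using step1.IH assms zspan.add by metis
next
  case (step2 i)
  have "(i - 1) *s u = i *s u + - u" by (simp add: vec_eq_iff algebra_simps)
  then show ?case using step2.IH assms zspan.add zspan.neg by metis
qed

lemma zspan_sum: "(\<And>i. i \<in> I \<Longrightarrow> f i \<in> zspan S) \<Longrightarrow> sum f I \<in> zspan S"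
  by (induction I rule: infinite_finite_induct) (auto intro: zspan.intros)

lemma supported_in_zspan:
  fixes v :: "int ^ 'n::finite"
  assumes "\<And>x. x \<notin> S \<Longrightarrow> v $ x = 0"
  shows "v \<in> zspan S"
proof -
  have "v = (\<Sum>x\<in>S. v $ x *s axis x 1)"
    using assms by (auto simp: vec_eq_iff sum_component axis_def if_distrib sum.delta' cong: if_cong)
  also have "\<dots> \<in> zspan S"
    by (intro zspan_sum zspan_smult zspan.gen)
  finally show ?thesis .
qed

lemma zspan_supp2_eq_range:
  fixes M :: "int^'n::finite^'n"
  assumes "\<And>b. b \<in> supp2 M \<Longrightarrow> axis b 1 \<in> range ((*v) M)"
  shows "zspan (supp2 M) = range ((*v) M)"
proof
  show "zspan (supp2 M) \<subseteq> range ((*v) M)"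
  proof
    fix v assume "v \<in> zspan (supp2 M)"
    then show "v \<in> range ((*v) M)"
    proof (induction rule: zspan.induct)
      case zero
      show ?case by (metis matrix_vector_mult_0_right rangeI)
    next
      case (gen b)
      then show ?case by (rule assms)
    next
      case (add u v)
      then obtain w w' where "u = M *v w" "v = M *v w'" by blast
      then have "u + v = M *v (w + w')" by (simp add: matrix_vector_right_distrib)
      then show ?case by blast
    next
      case (neg u)
      then show ?case by (blast intro: uminus_in_range_matrix_vector_mult)
    qed
  qed
  show "range ((*v) M) \<subseteq> zspan (supp2 M)"
  proof (intro subsetI supported_in_zspan)
    fix v x assume "v \<in> range ((*v) M)" and "x \<notin> supp2 M"
    then show "v $ x = 0" by (auto simp: supp2_def matrix_vector_mult_def)
  qed
qed

lemma card_Un_eq_double_imp_inj_disjoint: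
  assumes "finite I" and card: "card (f ` I \<union> h ` I) = 2 * card I"
  shows "inj_on f I" "inj_on h I" "f ` I \<inter> h ` I = {}"
proof -
  have "card (f ` I) + card (h ` I) = card (f ` I \<union> h ` I) + card (f ` I \<inter> h ` I)"
    using card_Un_Int[of "f ` I" "h ` I"] \<open>finite I\<close> by simp
  moreover have "card (f ` I) \<le> card I" "card (h ` I) \<le> card I"
    using \<open>finite I\<close> by (simp_all add: card_image_le)
  ultimately have "card (f ` I) = card I" "card (h ` I) = card I" "card (f ` I \<inter> h ` I) = 0"
    using card by linarith+
  then show "inj_on f I" "inj_on h I" "f ` I \<inter> h ` I = {}"
    using \<open>finite I\<close> by (simp_all add: eq_card_imp_inj_on)
qed

definition letter_sign :: "'v \<times> bool \<Rightarrow> int" where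
  "letter_sign u = (if snd u then 1 else -1)"

lemma letter_sign_square [simp]: "letter_sign u * letter_sign u = 1"
  by (simp add: letter_sign_def)

lemma cls_component: "cls u $ x = (if fst u = x then letter_sign u else 0)"
  by (simp add: cls_def letter_sign_def axis_def)

lemma cls_dot_cls:
  "(\<Sum>y\<in>UNIV. cls u $ y * cls v $ y) =
    (if fst u = fst v then letter_sign u * letter_sign v else 0)"
proof -
  have "(\<Sum>y\<in>UNIV. cls u $ y * cls v $ y) =
      (\<Sum>y\<in>UNIV. if y = fst u then letter_sign u * cls v $ y else 0)"
    by (rule sum.cong) (simp_all add: cls_component)
  then show ?thesis by (simp add: cls_component)
qed

lemma wedge_mult_vec:
  "wedge u v *v w = (\<Sum>y\<in>UNIV. v $ y * w $ y) *s u - (\<Sum>y\<in>UNIV. u $ y * w $ y) *s v"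
  by (simp add: vec_eq_iff wedge_def matrix_vector_mult_def right_diff_distrib sum_subtractf
      sum_distrib_left sum_distrib_right mult_ac)

lemma Qform_mult_cls:
  assumes inj_a: "inj_on (fst \<circ> a) {..<g}" and inj_star: "inj_on (fst \<circ> star \<circ> a) {..<g}"
    and disjoint: "(fst \<circ> a) ` {..<g} \<inter> (fst \<circ> star \<circ> a) ` {..<g} = {}"
    and i0: "i0 < g" "E (fst (star (a i0))) (fst (a i0))"
  shows "Qform E star a g *v cls (star (a i0)) = cls (a i0)"
    and "Qform E star a g *v cls (a i0) = - cls (star (a i0))"
proof -
  let ?I = "{i. i < g \<and> E (fst (star (a i))) (fst (a i))}"
  have a_eq: "fst (a i) = fst (a i0) \<longleftrightarrow> i = i0" if "i < g" for i
    using inj_a that i0 by (auto simp: inj_on_def)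
  have star_eq: "fst (star (a i)) = fst (star (a i0)) \<longleftrightarrow> i = i0" if "i < g" for i
    using inj_star that i0 by (auto simp: inj_on_def)
  have a_neq_star: "fst (a i) \<noteq> fst (star (a j))" if "i < g" "j < g" for i j
    using disjoint that by auto
  have "Qform E star a g *v cls (star (a i0)) = (\<Sum>i\<in>?I. if i = i0 then cls (a i0) else 0)"
    unfolding Qform_def sum_matrix_vector_mult wedge_mult_vec cls_dot_cls
    by (rule sum.cong) (auto simp: star_eq a_neq_star i0 vec_eq_iff)
  also have "\<dots> = cls (a i0)"
    using i0 by simp
  finally show "Qform E star a g *v cls (star (a i0)) = cls (a i0)" .
  have "Qform E star a g *v cls (a i0) = (\<Sum>i\<in>?I. if i = i0 then - cls (star (a i0)) else 0)"
    unfolding Qform_def sum_matrix_vector_mult wedge_mult_vec cls_dot_cls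
    by (rule sum.cong) (auto simp: a_eq a_neq_star[symmetric] i0 vec_eq_iff)
  also have "\<dots> = - cls (star (a i0))"
    using i0 by simp
  finally show "Qform E star a g *v cls (a i0) = - cls (star (a i0))" .
qed

lemma supp2_Qform_subset:
  "supp2 (Qform E star a g) \<subseteq>
     (\<Union>i\<in>{i. i < g \<and> E (fst (star (a i))) (fst (a i))}. {fst (a i), fst (star (a i))})"
proof
  fix b assume b: "b \<in> supp2 (Qform E star a g)"
  show "b \<in> (\<Union>i\<in>{i. i < g \<and> E (fst (star (a i))) (fst (a i))}. {fst (a i), fst (star (a i))})"
  proof (rule ccontr)
    assume none:
      "b \<notin> (\<Union>i\<in>{i. i < g \<and> E (fst (star (a i))) (fst (a i))}. {fst (a i), fst (star (a i))})"
    have "Qform E star a g $ b = 0"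
      unfolding Qform_def sum_component
      by (rule sum.neutral) (use none in \<open>auto simp: vec_eq_iff wedge_def cls_component\<close>)
    with b show False by (simp add: supp2_def)
  qed
qed

lemma axis_in_range_if_cls_in_range:
  fixes M :: "int^'n::finite^'m"
  assumes "cls u \<in> range ((*v) M)"
  shows "axis (fst u) 1 \<in> range ((*v) M)"
  using assms uminus_in_range_matrix_vector_mult[OF assms] by (auto simp: cls_def split: if_splits)

lemma axis_in_range_Qform:
  assumes inj_a: "inj_on (fst \<circ> a) {..<g}" and inj_star: "inj_on (fst \<circ> star \<circ> a) {..<g}"
    and disjoint: "(fst \<circ> a) ` {..<g} \<inter> (fst \<circ> star \<circ> a) ` {..<g} = {}"
    and b: "b \<in> supp2 (Qform E star a g)"
  shows "axis b 1 \<in> range ((*v) (Qform E star a g))"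
proof -
  obtain i where i: "i < g" "E (fst (star (a i))) (fst (a i))"
    and "b = fst (a i) \<or> b = fst (star (a i))"
    using b supp2_Qform_subset by blast
  moreover have "cls (a i) \<in> range ((*v) (Qform E star a g))"
    using Qform_mult_cls(1)[where a = a and star = star and E = E, OF inj_a inj_star disjoint i]
    by (metis rangeI)
  moreover have "cls (star (a i)) \<in> range ((*v) (Qform E star a g))"
    using Qform_mult_cls(2)[where a = a and star = star and E = E, OF inj_a inj_star disjoint i]
    by (metis minus_minus rangeI uminus_in_range_matrix_vector_mult)
  ultimately show ?thesis by (metis axis_in_range_if_cls_in_range)
qed

theorem lemma4p5:
  fixes E :: "'v::finite \<Rightarrow> 'v \<Rightarrow> bool"
    and star :: "'v \<times> bool \<Rightarrow> 'v \<times> bool"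
    and a :: "nat \<Rightarrow> 'v \<times> bool"
    and g :: nat
    and A0 :: "int ^ 'v ^ 'v"
  assumes sym: "\<forall>x y. E x y \<longrightarrow> E y x"
    and irrefl: "\<forall>x. \<not> E x x"
    and card: "CARD('v) = 2 * g"
    and star_bij: "bij star"
    and star_star: "\<forall>u. star (star u) = letter_inv u"
    and cover: "(fst \<circ> a) ` {..<g} \<union> (fst \<circ> star \<circ> a) ` {..<g} = UNIV"
    and Q_nz: "Qform E star a g \<noteq> 0"
    and A0_G: "A0 \<in> genG E (supp2 (Qform E star a g))"
    and fixQ: "act2 A0 (Qform E star a g) = Qform E star a g"
  shows "(\<lambda>h. A0 *v h) ` zspan (supp2 (Qform E star a g)) = zspan (supp2 (Qform E star a g))"
proof -
  let ?Q = "Qform E star a g"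
  have "card ((fst \<circ> a) ` {..<g} \<union> (fst \<circ> star \<circ> a) ` {..<g}) = 2 * card {..<g}"
    using card cover by simp
  then have "zspan (supp2 ?Q) = range ((*v) ?Q)"
    by (intro zspan_supp2_eq_range axis_in_range_Qform card_Un_eq_double_imp_inj_disjoint) simp_all
  moreover have "invertible A0"
    using A0_G by (rule genG_invertible)
  ultimately show ?thesis
    using range_matrix_vector_mult_invariant_under_congruence fixQ by (simp add: act2_def)
qed

end
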